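(* Let $\mathbf{A}\in\mathbb{R}^{m\times n}$ with $\|\mathbf{A}\|_\infty\le1$, let $\rho>0$, and let $r(x,y)=\rho\sum_{i\in[m]}x_i\log x_i+\frac1\rho x^\top|\mathbf{A}|(y\circ y)$. Let $\delta>0$, let $\bar{x}\in\Delta^m$ have strictly positive entries, let $y\in[0,1]^n$, and let $x=\mathcal{O}_\delta(\bar{x})$. Set $\bar z=(\bar x,y)$ and $z=(x,y)$. Then for every $w\in\Delta^m\times[0,1]^n$, $$V^r_z(w)-V^r_{\bar z}(w)\le\Big(\rho+\frac8\rho\Big)m\delta.$$
   Context: Padding oracle: for $\delta>0$ and $\bar x\in\Delta^m$, $\mathcal{O}_\delta(\bar x)=\hat x/\|\hat x\|_1$ where $\hat x_i=\max(\bar x_i,\delta)$. $V^r_{z'}(w)=r(w)-r(z')-\langle\nabla r(z'),w-z'\rangle$ is the Bregman divergence, with the convention $0\log 0=0$. $\|\mathbf{A}\|_\infty=\max_i\sum_j|\mathbf{A}_{ij}|$; $|\mathbf{A}|$ is entrywise absolute value and $y\circ y$ the entrywise square; $\Delta^m$ is the probability simplex. *)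

theory Defs
  imports "HOL-Analysis.Analysis"
begin

definition in_simplex :: "real^'m \<Rightarrow> bool" where
  "in_simplex x \<longleftrightarrow> (\<forall>i. 0 \<le> x $ i) \<and> (\<Sum>i\<in>UNIV. x $ i) = 1"

definition in_box01 :: "real^'n \<Rightarrow> bool" where
  "in_box01 y \<longleftrightarrow> (\<forall>j. 0 \<le> y $ j \<and> y $ j \<le> 1)"

definition mat_inf_norm :: "real^'n^'m \<Rightarrow> real" where
  "mat_inf_norm A = Max (range (\<lambda>i. \<Sum>j\<in>UNIV. \<bar>A $ i $ j\<bar>))"

definition pad_oracle :: "real \<Rightarrow> real^'m \<Rightarrow> real^'m" where
  "pad_oracle \<delta> xb = (let xh = (\<chi> i. max (xb $ i) \<delta>) in
       (\<chi> i. xh $ i / (\<Sum>k\<in>UNIV. \<bar>xh $ k\<bar>)))"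

text \<open>The regularizer r(x,y) = rho sum x_i log x_i + (1/rho) x^T |A| (y o y);
  note Isabelle's ln 0 = 0 realises the convention 0 log 0 = 0.\<close>
definition reg_r :: "real^'n^'m \<Rightarrow> real \<Rightarrow> ((real^'m) \<times> (real^'n)) \<Rightarrow> real" where
  "reg_r A \<rho> z = \<rho> * (\<Sum>i\<in>UNIV. fst z $ i * ln (fst z $ i))
      + (1 / \<rho>) * (\<Sum>i\<in>UNIV. \<Sum>j\<in>UNIV. fst z $ i * \<bar>A $ i $ j\<bar> * (snd z $ j)\<^sup>2)"

definition bregman :: "('a::real_normed_vector \<Rightarrow> real) \<Rightarrow> 'a \<Rightarrow> 'a \<Rightarrow> real" where
  "bregman r z' w = r w - r z' - frechet_derivative r (at z') (w - z')"

end

theory Submission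
  imports Defs
begin

text \<open>Both Bregman divergences contain \<open>r(w)\<close>, so for a common \<open>y\<close> their difference is an
  entropy part \<open>\<Sum>i. u i * (ln (xb i) - ln (x i)) + x i - xb i\<close> plus a coupling part linear in
  \<open>xb - x\<close>. Padding replaces \<open>xb i\<close> by \<open>max (xb i) \<delta>\<close> and renormalises by the total mass
  \<open>S \<le> 1 + m \<delta>\<close>, whence \<open>ln (xb i / x i) \<le> ln S \<le> S - 1\<close> and \<open>\<Sum>i. |xb i - x i| \<le> 2 (S - 1)\<close>;
  with \<open>\<parallel>A\<parallel>\<^sub>\<infinity> \<le> 1\<close> and \<open>|y j * (v j - y j)| \<le> 1\<close> the difference is at most \<open>(\<rho> + 4/\<rho>) (S - 1)\<close>.\<close>

lemma has_derivative_vec_nth_fst [derivative_intros]: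
  "((\<lambda>z. fst z $ i) has_derivative (\<lambda>h. fst h $ i)) F"
  by (intro bounded_linear_imp_has_derivative
      bounded_linear_compose[OF bounded_linear_vec_nth bounded_linear_fst])

lemma has_derivative_vec_nth_snd [derivative_intros]:
  "((\<lambda>z. snd z $ i) has_derivative (\<lambda>h. snd h $ i)) F"
  by (intro bounded_linear_imp_has_derivative
      bounded_linear_compose[OF bounded_linear_vec_nth bounded_linear_snd])

lemma reg_r_has_derivative:
  fixes A :: "real^'n^'m" and x :: "real^'m" and y :: "real^'n"
  assumes "\<And>i. x $ i > 0"
  shows "(reg_r A \<rho> has_derivative (\<lambda>h. \<rho> * (\<Sum>i\<in>UNIV. (ln (x $ i) + 1) * fst h $ i)
     + (1 / \<rho>) * (\<Sum>i\<in>UNIV. \<Sum>j\<in>UNIV. \<bar>A $ i $ j\<bar> *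
          (fst h $ i * (y $ j)\<^sup>2 + 2 * x $ i * y $ j * snd h $ j)))) (at (x, y))"
  unfolding reg_r_def
  apply (rule derivative_eq_intros refl | simp add: assms)+
  using assms by (auto intro!: ext sum.cong simp: algebra_simps less_imp_not_eq2)

lemma bregman_reg_r_diff:
  fixes A :: "real^'n^'m" and x x' :: "real^'m" and y :: "real^'n"
  assumes "\<And>i. x $ i > 0" and "\<And>i. x' $ i > 0"
  shows "bregman (reg_r A \<rho>) (x, y) w - bregman (reg_r A \<rho>) (x', y) w
    = \<rho> * (\<Sum>i\<in>UNIV. fst w $ i * (ln (x' $ i) - ln (x $ i)) + x $ i - x' $ i)
      + (2 / \<rho>) * (\<Sum>i\<in>UNIV. \<Sum>j\<in>UNIV.
          (x' $ i - x $ i) * \<bar>A $ i $ j\<bar> * (y $ j * (snd w $ j - y $ j)))"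
proof -
  define u v where "u = fst w" and "v = snd w"
  have entropy: "(\<Sum>i\<in>UNIV. x' $ i * ln (x' $ i)) - (\<Sum>i\<in>UNIV. x $ i * ln (x $ i))
      + (\<Sum>i\<in>UNIV. (ln (x' $ i) + 1) * (u $ i - x' $ i))
      - (\<Sum>i\<in>UNIV. (ln (x $ i) + 1) * (u $ i - x $ i))
    = (\<Sum>i\<in>UNIV. u $ i * (ln (x' $ i) - ln (x $ i)) + x $ i - x' $ i)"
    by (simp add: sum_subtractf[symmetric] sum.distrib[symmetric] algebra_simps)
  have coupling: "(\<Sum>i\<in>UNIV. \<Sum>j\<in>UNIV. x' $ i * \<bar>A $ i $ j\<bar> * (y $ j)\<^sup>2)
      - (\<Sum>i\<in>UNIV. \<Sum>j\<in>UNIV. x $ i * \<bar>A $ i $ j\<bar> * (y $ j)\<^sup>2)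
      + (\<Sum>i\<in>UNIV. \<Sum>j\<in>UNIV. \<bar>A $ i $ j\<bar> *
          ((u $ i - x' $ i) * (y $ j)\<^sup>2 + 2 * x' $ i * y $ j * (v $ j - y $ j)))
      - (\<Sum>i\<in>UNIV. \<Sum>j\<in>UNIV. \<bar>A $ i $ j\<bar> *
          ((u $ i - x $ i) * (y $ j)\<^sup>2 + 2 * x $ i * y $ j * (v $ j - y $ j)))
    = 2 * (\<Sum>i\<in>UNIV. \<Sum>j\<in>UNIV. (x' $ i - x $ i) * \<bar>A $ i $ j\<bar> * (y $ j * (v $ j - y $ j)))"
    by (simp add: sum_subtractf[symmetric] sum.distrib[symmetric] sum_distrib_left algebra_simps)
  have scale: "2 / \<rho> * (\<Sum>i\<in>UNIV. \<Sum>j\<in>UNIV. (x' $ i - x $ i) * \<bar>A $ i $ j\<bar> * (y $ j * (v $ j - y $ j)))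
    = 1 / \<rho> * (2 * (\<Sum>i\<in>UNIV. \<Sum>j\<in>UNIV. (x' $ i - x $ i) * \<bar>A $ i $ j\<bar> * (y $ j * (v $ j - y $ j))))"
    by simp
  show ?thesis
    unfolding bregman_def
      frechet_derivative_at[OF reg_r_has_derivative[OF assms(1)], symmetric]
      frechet_derivative_at[OF reg_r_has_derivative[OF assms(2)], symmetric]
      reg_r_def fst_conv snd_conv fst_diff snd_diff vector_minus_component
      u_def[symmetric] v_def[symmetric] scale entropy[symmetric] coupling[symmetric]
    by (simp add: algebra_simps)
qed


definition pad_mass :: "real \<Rightarrow> real^'m \<Rightarrow> real" where
  "pad_mass \<delta> xb = (\<Sum>k\<in>UNIV. max (xb $ k) \<delta>)"

lemma pad_oracle_nth:
  assumes "\<delta> > 0"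
  shows "pad_oracle \<delta> xb $ i = max (xb $ i) \<delta> / pad_mass \<delta> xb"
proof -
  have "(\<Sum>k\<in>UNIV. \<bar>max (xb $ k) \<delta>\<bar>) = pad_mass \<delta> xb"
    unfolding pad_mass_def using assms by (intro sum.cong) auto
  then show ?thesis
    unfolding pad_oracle_def Let_def by simp
qed

lemma pad_mass_ge_one:
  assumes "in_simplex xb"
  shows "pad_mass \<delta> xb \<ge> 1"
proof -
  have "(\<Sum>k\<in>UNIV. xb $ k) \<le> pad_mass \<delta> xb"
    unfolding pad_mass_def by (intro sum_mono) auto
  then show ?thesis
    using assms by (simp add: in_simplex_def)
qed

lemma pad_mass_le:
  fixes xb :: "real^'m"
  assumes "in_simplex xb" and "\<delta> \<ge> 0"
  shows "pad_mass \<delta> xb \<le> 1 + real CARD('m) * \<delta>"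
proof -
  have "pad_mass \<delta> xb - 1 = (\<Sum>k\<in>UNIV. max (xb $ k) \<delta> - xb $ k)"
    using assms(1) by (simp add: pad_mass_def in_simplex_def sum_subtractf)
  also have "\<dots> \<le> (\<Sum>k\<in>(UNIV::'m set). \<delta>)"
    using assms by (intro sum_mono) (auto simp: in_simplex_def max_def)
  finally show ?thesis
    by simp
qed

lemma pad_oracle_pos:
  assumes "in_simplex xb" and "\<delta> > 0"
  shows "pad_oracle \<delta> xb $ i > 0"
  using pad_mass_ge_one[OF assms(1), of \<delta>] assms(2)
  by (simp add: pad_oracle_nth less_max_iff_disj)

lemma sum_pad_oracle:
  assumes "in_simplex xb" and "\<delta> > 0"
  shows "(\<Sum>i\<in>UNIV. pad_oracle \<delta> xb $ i) = 1"
  using pad_mass_ge_one[OF assms(1), of \<delta>] assms(2)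
  by (simp add: pad_oracle_nth sum_divide_distrib[symmetric] pad_mass_def[symmetric])

lemma ln_diff_pad_oracle_le:
  assumes "in_simplex xb" and "\<delta> > 0" and "xb $ i > 0"
  shows "ln (xb $ i) - ln (pad_oracle \<delta> xb $ i) \<le> ln (pad_mass \<delta> xb)"
proof -
  have "ln (pad_oracle \<delta> xb $ i) = ln (max (xb $ i) \<delta>) - ln (pad_mass \<delta> xb)"
    using pad_mass_ge_one[OF assms(1), of \<delta>] assms(2)
    by (simp add: pad_oracle_nth ln_div less_max_iff_disj)
  moreover have "ln (xb $ i) \<le> ln (max (xb $ i) \<delta>)"
    using assms(3) by simp
  ultimately show ?thesis
    by simp
qed

lemma sum_abs_diff_pad_oracle_le:
  assumes "in_simplex xb" and "\<delta> > 0"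
  shows "(\<Sum>i\<in>UNIV. \<bar>xb $ i - pad_oracle \<delta> xb $ i\<bar>) \<le> 2 * (pad_mass \<delta> xb - 1)"
proof -
  let ?x = "pad_oracle \<delta> xb" and ?xh = "\<lambda>i. max (xb $ i) \<delta>"
  have "?x $ i \<le> ?xh i / 1" for i
    unfolding pad_oracle_nth[OF assms(2)] using pad_mass_ge_one[OF assms(1), of \<delta>] assms(2)
    by (intro divide_left_mono) auto
  then have "\<bar>xb $ i - ?x $ i\<bar> \<le> (?xh i - xb $ i) + (?xh i - ?x $ i)" for i
    by (auto simp: abs_le_iff)
  then have "(\<Sum>i\<in>UNIV. \<bar>xb $ i - ?x $ i\<bar>) \<le> (\<Sum>i\<in>UNIV. (?xh i - xb $ i) + (?xh i - ?x $ i))"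
    by (intro sum_mono)
  also have "\<dots> = 2 * (pad_mass \<delta> xb - 1)"
    using assms sum_pad_oracle[OF assms]
    by (simp add: in_simplex_def pad_mass_def sum.distrib sum_subtractf sum_negf sum_distrib_left[symmetric])
  finally show ?thesis .
qed

lemma entropy_gap_pad_oracle_le:
  assumes "in_simplex xb" and "\<forall>i. xb $ i > 0" and "\<delta> > 0" and "in_simplex u"
  shows "(\<Sum>i\<in>UNIV. u $ i * (ln (xb $ i) - ln (pad_oracle \<delta> xb $ i))
            + pad_oracle \<delta> xb $ i - xb $ i) \<le> pad_mass \<delta> xb - 1"
proof -
  let ?L = "ln (pad_mass \<delta> xb)"
  have "(\<Sum>i\<in>UNIV. u $ i * (ln (xb $ i) - ln (pad_oracle \<delta> xb $ i))
            + pad_oracle \<delta> xb $ i - xb $ i)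
      = (\<Sum>i\<in>UNIV. u $ i * (ln (xb $ i) - ln (pad_oracle \<delta> xb $ i)))"
    using assms sum_pad_oracle[OF assms(1,3)]
    by (simp add: in_simplex_def sum.distrib sum_subtractf)
  also have "\<dots> \<le> (\<Sum>i\<in>UNIV. u $ i * ?L)"
    using assms ln_diff_pad_oracle_le[OF assms(1,3)]
    by (intro sum_mono mult_left_mono) (auto simp: in_simplex_def)
  also have "\<dots> = ?L"
    using assms(4) by (simp add: in_simplex_def sum_distrib_right[symmetric])
  also have "\<dots> \<le> pad_mass \<delta> xb - 1"
    using pad_mass_ge_one[OF assms(1), of \<delta>] by (intro ln_le_minus_one) simp
  finally show ?thesis .
qed

lemma row_abs_sum_le_mat_inf_norm:
  "(\<Sum>j\<in>UNIV. \<bar>A $ i $ j\<bar>) \<le> mat_inf_norm A"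
  unfolding mat_inf_norm_def by (rule Max_ge) auto

lemma abs_bilinear_le_mat_inf_norm:
  fixes A :: "real^'n^'m" and c :: "'m \<Rightarrow> real" and a :: "'n \<Rightarrow> real"
  assumes "\<And>j. \<bar>a j\<bar> \<le> 1"
  shows "(\<Sum>i\<in>UNIV. \<Sum>j\<in>UNIV. c i * \<bar>A $ i $ j\<bar> * a j)
           \<le> mat_inf_norm A * (\<Sum>i\<in>UNIV. \<bar>c i\<bar>)"
proof -
  have "c i * \<bar>A $ i $ j\<bar> * a j \<le> \<bar>c i\<bar> * \<bar>A $ i $ j\<bar>" for i j
  proof -
    have "c i * \<bar>A $ i $ j\<bar> * a j \<le> \<bar>c i * \<bar>A $ i $ j\<bar> * a j\<bar>"
      by (rule abs_ge_self)
    also have "\<dots> = \<bar>c i\<bar> * \<bar>A $ i $ j\<bar> * \<bar>a j\<bar>"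
      by (simp add: abs_mult)
    also have "\<dots> \<le> \<bar>c i\<bar> * \<bar>A $ i $ j\<bar>"
      using assms by (intro mult_left_le) auto
    finally show ?thesis .
  qed
  then have "(\<Sum>i\<in>UNIV. \<Sum>j\<in>UNIV. c i * \<bar>A $ i $ j\<bar> * a j)
      \<le> (\<Sum>i\<in>UNIV. \<bar>c i\<bar> * (\<Sum>j\<in>UNIV. \<bar>A $ i $ j\<bar>))"
    unfolding sum_distrib_left by (intro sum_mono)
  also have "\<dots> \<le> (\<Sum>i\<in>UNIV. \<bar>c i\<bar> * mat_inf_norm A)"
    by (intro sum_mono mult_left_mono row_abs_sum_le_mat_inf_norm) auto
  also have "\<dots> = mat_inf_norm A * (\<Sum>i\<in>UNIV. \<bar>c i\<bar>)"
    by (simp add: sum_distrib_left mult.commute)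
  finally show ?thesis .
qed

lemma coupling_gap_pad_oracle_le:
  fixes A :: "real^'n^'m"
  assumes "mat_inf_norm A \<le> 1" and "in_simplex xb" and "\<delta> > 0"
    and "in_box01 y" and "in_box01 v"
  shows "(\<Sum>i\<in>UNIV. \<Sum>j\<in>UNIV.
           (xb $ i - pad_oracle \<delta> xb $ i) * \<bar>A $ i $ j\<bar> * (y $ j * (v $ j - y $ j)))
         \<le> 2 * (pad_mass \<delta> xb - 1)"
proof -
  let ?x = "pad_oracle \<delta> xb"
  have "\<bar>y $ j * (v $ j - y $ j)\<bar> \<le> 1" for j
    using assms(4,5)[unfolded in_box01_def, rule_format, of j] unfolding abs_mult
    by (intro mult_le_one) (auto simp: abs_le_iff)
  then have "(\<Sum>i\<in>UNIV. \<Sum>j\<in>UNIV. (xb $ i - ?x $ i) * \<bar>A $ i $ j\<bar> * (y $ j * (v $ j - y $ j)))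
      \<le> mat_inf_norm A * (\<Sum>i\<in>UNIV. \<bar>xb $ i - ?x $ i\<bar>)"
    by (rule abs_bilinear_le_mat_inf_norm[where c="\<lambda>i. xb $ i - ?x $ i"
          and a="\<lambda>j. y $ j * (v $ j - y $ j)"])
  also have "\<dots> \<le> 1 * (2 * (pad_mass \<delta> xb - 1))"
    using sum_abs_diff_pad_oracle_le[OF assms(2,3)] assms(1) pad_mass_ge_one[OF assms(2), of \<delta>]
    by (intro mult_mono) auto
  finally show ?thesis
    by simp
qed

theorem mainTheorem3:
  fixes A :: "real^'n^'m" and \<rho> \<delta> :: real
    and xb :: "real^'m" and y :: "real^'n"
    and w :: "(real^'m) \<times> (real^'n)"
  assumes "mat_inf_norm A \<le> 1"
    and "\<rho> > 0"
    and "\<delta> > 0"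
    and "in_simplex xb" and "\<forall>i. xb $ i > 0"
    and "in_box01 y"
    and "in_simplex (fst w)" and "in_box01 (snd w)"
  shows "bregman (reg_r A \<rho>) (pad_oracle \<delta> xb, y) w
           - bregman (reg_r A \<rho>) (xb, y) w
         \<le> (\<rho> + 8 / \<rho>) * real CARD('m) * \<delta>"
proof -
  let ?x = "pad_oracle \<delta> xb" and ?S = "pad_mass \<delta> xb"
  have S: "1 \<le> ?S" "?S \<le> 1 + real CARD('m) * \<delta>"
    using pad_mass_ge_one[OF assms(4)] pad_mass_le[OF assms(4)] assms(3) by auto
  have "bregman (reg_r A \<rho>) (?x, y) w - bregman (reg_r A \<rho>) (xb, y) w
      \<le> \<rho> * (?S - 1) + (2 / \<rho>) * (2 * (?S - 1))"
    unfolding bregman_reg_r_diff[OF pad_oracle_pos[OF assms(4,3)] assms(5)[rule_format]]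
    using assms(2) entropy_gap_pad_oracle_le[OF assms(4,5,3,7)]
      coupling_gap_pad_oracle_le[OF assms(1,4,3,6,8)]
    by (intro add_mono mult_left_mono) auto
  also have "\<dots> = (\<rho> + 4 / \<rho>) * (?S - 1)"
    by (simp add: algebra_simps add_divide_distrib[symmetric])
  also have "\<dots> \<le> (\<rho> + 8 / \<rho>) * (?S - 1)"
    using assms(2) S by (intro mult_right_mono add_left_mono divide_right_mono) auto
  also have "\<dots> \<le> (\<rho> + 8 / \<rho>) * real CARD('m) * \<delta>"
    using assms(2) S by (simp add: mult.assoc mult_left_mono)
  finally show ?thesis .
qed

end
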